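(* Let $\mathcal{G}_R$ be the class of all finite reflexive graphs and let $K_n$ be the complete reflexive graph on $n$ vertices. Then the class $\mathrm{Av}(K_n)=\{H\in\mathcal{G}_R: K_n\not\preceq H\}$, with respect to the strong homomorphic image ordering $\preceq$, is well quasi-ordered.
   Context: A reflexive graph is a set with a symmetric edge relation having a loop at every vertex. A homomorphism maps edges to edges; it is strong if additionally every edge of the target between vertices of the image is the image of an edge. Strong homomorphic image ordering: $A\preceq B$ iff there is a surjective strong homomorphism $B\to A$. Well quasi-ordered means no infinite strictly decreasing sequence and no infinite antichain; graphs considered up to isomorphism. *)

theory Defs
  imports Main
begin

text \<open>Every finite graph is isomorphic to one of this form, so this represents all finite graphs up to isomorphism.\<close>
type_synonym graph = "nat set \<times> (nat \<times> nat) set"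

definition verts :: "graph \<Rightarrow> nat set" where "verts G = fst G"
definition edges :: "graph \<Rightarrow> (nat \<times> nat) set" where "edges G = snd G"

definition finite_reflexive_graph :: "graph \<Rightarrow> bool" where
  "finite_reflexive_graph G \<longleftrightarrow>
     finite (verts G) \<and> edges G \<subseteq> verts G \<times> verts G \<and>
     (\<forall>x y. (x, y) \<in> edges G \<longrightarrow> (y, x) \<in> edges G) \<and>
     (\<forall>x\<in>verts G. (x, x) \<in> edges G)"

definition graph_hom :: "graph \<Rightarrow> graph \<Rightarrow> (nat \<Rightarrow> nat) \<Rightarrow> bool" where
  "graph_hom G H f \<longleftrightarrow>
     (\<forall>x\<in>verts G. f x \<in> verts H) \<and>
     (\<forall>x y. (x, y) \<in> edges G \<longrightarrow> (f x, f y) \<in> edges H)"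

definition strong_hom :: "graph \<Rightarrow> graph \<Rightarrow> (nat \<Rightarrow> nat) \<Rightarrow> bool" where
  "strong_hom G H f \<longleftrightarrow> graph_hom G H f \<and>
     (\<forall>u v. u \<in> f ` verts G \<and> v \<in> f ` verts G \<and> (u, v) \<in> edges H \<longrightarrow>
        (\<exists>x y. (x, y) \<in> edges G \<and> f x = u \<and> f y = v))"

definition shi_le :: "graph \<Rightarrow> graph \<Rightarrow> bool" where
  "shi_le A B \<longleftrightarrow> (\<exists>f. strong_hom B A f \<and> f ` verts B = verts A)"

definition complete_rgraph :: "nat \<Rightarrow> graph" where
  "complete_rgraph n = ({0..<n}, {0..<n} \<times> {0..<n})"

definition wqo_class :: "(graph \<Rightarrow> graph \<Rightarrow> bool) \<Rightarrow> graph set \<Rightarrow> bool" where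
  "wqo_class R C \<longleftrightarrow>
     \<not> (\<exists>g :: nat \<Rightarrow> graph. (\<forall>i. g i \<in> C) \<and> (\<forall>i. R (g (Suc i)) (g i) \<and> \<not> R (g i) (g (Suc i)))) \<and>
     \<not> (\<exists>g :: nat \<Rightarrow> graph. (\<forall>i. g i \<in> C) \<and> (\<forall>i j. i \<noteq> j \<longrightarrow> \<not> R (g i) (g j)))"

definition Av_K :: "nat \<Rightarrow> graph set" where
  "Av_K n = {H. finite_reflexive_graph H \<and> \<not> shi_le (complete_rgraph n) H}"

end

theory Submission
  imports Defs "HOL-Library.Ramsey"
begin

text \<open>Call two vertices false twins if they are non-adjacent and have the same neighbours. The
classes of false twins are independent sets with either all or no edges between two of them, so
if two reflexive graphs have the same quotient on their twin classes and the classes of the first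
are no larger than the corresponding classes of the second, then collapsing each class of the
second onto its partner is a surjective strong homomorphism. A graph with a matching of \<open>n\<^sup>2\<close>
edges maps onto \<open>K\<^sub>n\<close>, so a graph in \<open>Av(K\<^sub>n)\<close> has a maximum matching of fewer than \<open>n\<^sup>2\<close> edges;
its unmatched vertices form an independent set whose neighbourhoods lie among the fewer than
\<open>2n\<^sup>2\<close> matched vertices, which bounds the number of twin classes. So only finitely many quotients
occur, and Dickson's lemma applied to the class sizes excludes infinite antichains. Strictly
descending chains cannot exist in any case: a strict descent lowers the number of vertices.\<close>

lemma finite_reflexive_graphD:
  assumes "finite_reflexive_graph G"
  shows "finite (verts G)"
    and "(x, y) \<in> edges G \<Longrightarrow> x \<in> verts G"
    and "(x, y) \<in> edges G \<Longrightarrow> y \<in> verts G"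
    and "(x, y) \<in> edges G \<Longrightarrow> (y, x) \<in> edges G"
    and "x \<in> verts G \<Longrightarrow> (x, x) \<in> edges G"
  using assms unfolding finite_reflexive_graph_def by auto

lemma shi_leI:
  assumes B: "finite_reflexive_graph B" and onto: "f ` verts B = verts A"
    and preserve: "\<And>x y. (x, y) \<in> edges B \<Longrightarrow> (f x, f y) \<in> edges A"
    and reflect: "\<And>x y. x \<in> verts B \<Longrightarrow> y \<in> verts B \<Longrightarrow> f x \<noteq> f y \<Longrightarrow>
                    (f x, f y) \<in> edges A \<Longrightarrow> (x, y) \<in> edges B"
  shows "shi_le A B"
proof -
  have "graph_hom B A f"
    unfolding graph_hom_def using onto preserve by blast
  moreover have "\<exists>x y. (x, y) \<in> edges B \<and> f x = u \<and> f y = v"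
    if images: "u \<in> f ` verts B" "v \<in> f ` verts B" and uv: "(u, v) \<in> edges A" for u v
  proof -
    obtain x y where "x \<in> verts B" "y \<in> verts B" "f x = u" "f y = v"
      using images by blast
    then show ?thesis
      using reflect uv finite_reflexive_graphD(5)[OF B] by (cases "u = v") blast+
  qed
  ultimately show ?thesis
    unfolding shi_le_def strong_hom_def using onto by blast
qed

subsection \<open>Strictly descending chains\<close>

lemma card_verts_le_if_shi_le:
  assumes "shi_le A B" "finite (verts B)"
  shows "card (verts A) \<le> card (verts B)"
proof -
  obtain f where "f ` verts B = verts A"
    using assms(1) unfolding shi_le_def by blast
  then show ?thesis
    using card_image_le[OF assms(2), of f] by simp
qed

lemma shi_le_sym_if_card_verts_eq:
  assumes A: "finite_reflexive_graph A" and B: "finite_reflexive_graph B"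
    and le: "shi_le A B" and card_eq: "card (verts A) = card (verts B)"
  shows "shi_le B A"
proof -
  obtain f where strong: "strong_hom B A f" and onto: "f ` verts B = verts A"
    using le unfolding shi_le_def by blast
  have "inj_on f (verts B)"
    using eq_card_imp_inj_on[OF finite_reflexive_graphD(1)[OF B]] onto card_eq by metis
  define h where "h = inv_into (verts B) f"
  have h_f: "h (f x) = x" if "x \<in> verts B" for x
    unfolding h_def using \<open>inj_on f (verts B)\<close> that by simp
  have f_h: "f (h u) = u" and h_verts: "h u \<in> verts B" if "u \<in> verts A" for u
    unfolding h_def using that onto by (metis f_inv_into_f, metis inv_into_into)
  show ?thesis
  proof (rule shi_leI[OF A])
    show "h ` verts A = verts B"
      using h_verts h_f onto by force
  next
    fix u v assume "(u, v) \<in> edges A"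
    moreover have "u \<in> f ` verts B" "v \<in> f ` verts B"
      using calculation A onto finite_reflexive_graphD(2,3) by blast+
    ultimately obtain x y where "(x, y) \<in> edges B" "f x = u" "f y = v"
      using strong unfolding strong_hom_def by blast
    then show "(h u, h v) \<in> edges B"
      using h_f finite_reflexive_graphD(2,3)[OF B] by auto
  next
    fix u v assume "u \<in> verts A" "v \<in> verts A" "(h u, h v) \<in> edges B"
    then show "(u, v) \<in> edges A"
      using strong f_h unfolding strong_hom_def graph_hom_def by metis
  qed
qed

lemma no_strictly_descending_shi_chain:
  assumes "\<And>i. finite_reflexive_graph (g i)"
  shows "\<not> (\<forall>i. shi_le (g (Suc i)) (g i) \<and> \<not> shi_le (g i) (g (Suc i)))"
proof
  assume chain: "\<forall>i. shi_le (g (Suc i)) (g i) \<and> \<not> shi_le (g i) (g (Suc i))"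
  define c where "c i = card (verts (g i))" for i
  obtain k where "\<not> c (Suc k) < c k"
    using wf_no_infinite_down_chainE[OF wf_less, of c] by blast
  moreover have "c (Suc k) \<le> c k"
    unfolding c_def using chain assms card_verts_le_if_shi_le finite_reflexive_graphD(1) by blast
  ultimately have "shi_le (g k) (g (Suc k))"
    using chain assms shi_le_sym_if_card_verts_eq unfolding c_def by (metis le_neq_implies_less)
  then show False
    using chain by blast
qed

subsection \<open>Twin classes\<close>

definition false_twins :: "graph \<Rightarrow> nat \<Rightarrow> nat \<Rightarrow> bool" where
  "false_twins G u v \<longleftrightarrow> u \<in> verts G \<and> v \<in> verts G \<and>
     (u = v \<or> (u, v) \<notin> edges G \<and>
        (\<forall>w. w \<noteq> u \<and> w \<noteq> v \<longrightarrow> ((u, w) \<in> edges G \<longleftrightarrow> (v, w) \<in> edges G)))"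

definition twin_class :: "graph \<Rightarrow> nat \<Rightarrow> nat set" where
  "twin_class G u = {v. false_twins G u v}"

definition twin_classes :: "graph \<Rightarrow> nat set set" where
  "twin_classes G = twin_class G ` verts G"

definition classes_adjacent :: "graph \<Rightarrow> nat set \<Rightarrow> nat set \<Rightarrow> bool" where
  "classes_adjacent G A B \<longleftrightarrow> (\<exists>x\<in>A. \<exists>y\<in>B. (x, y) \<in> edges G)"

lemma false_twins_sym:
  "finite_reflexive_graph G \<Longrightarrow> false_twins G u v \<Longrightarrow> false_twins G v u"
  unfolding false_twins_def using finite_reflexive_graphD(4) by metis

lemma false_twins_trans:
  assumes G: "finite_reflexive_graph G" and uv: "false_twins G u v" and vw: "false_twins G v w"
  shows "false_twins G u w"
proof (cases "u = v \<or> v = w \<or> u = w")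
  case True
  then show ?thesis
    using uv vw unfolding false_twins_def by auto
next
  case False
  then have "(u, v) \<notin> edges G" "(v, w) \<notin> edges G"
    and "\<And>x. x \<noteq> u \<Longrightarrow> x \<noteq> v \<Longrightarrow> (u, x) \<in> edges G \<longleftrightarrow> (v, x) \<in> edges G"
    and "\<And>x. x \<noteq> v \<Longrightarrow> x \<noteq> w \<Longrightarrow> (v, x) \<in> edges G \<longleftrightarrow> (w, x) \<in> edges G"
    using uv vw unfolding false_twins_def by auto
  then show ?thesis
    using False uv vw finite_reflexive_graphD(4)[OF G] unfolding false_twins_def by metis
qed

lemma twin_class_subset: "twin_class G u \<subseteq> verts G"
  unfolding twin_class_def false_twins_def by auto

lemma self_in_twin_class: "u \<in> verts G \<Longrightarrow> u \<in> twin_class G u"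
  unfolding twin_class_def false_twins_def by auto

lemma twin_class_eq:
  "finite_reflexive_graph G \<Longrightarrow> v \<in> twin_class G u \<Longrightarrow> twin_class G v = twin_class G u"
  unfolding twin_class_def using false_twins_sym false_twins_trans by blast

lemma twin_class_in_twin_classes: "u \<in> verts G \<Longrightarrow> twin_class G u \<in> twin_classes G"
  unfolding twin_classes_def by blast

lemma twin_classes_eq_twin_class:
  "finite_reflexive_graph G \<Longrightarrow> A \<in> twin_classes G \<Longrightarrow> x \<in> A \<Longrightarrow> twin_class G x = A"
  unfolding twin_classes_def using twin_class_eq by blast

lemma twin_classes_subset: "A \<in> twin_classes G \<Longrightarrow> A \<subseteq> verts G"
  unfolding twin_classes_def using twin_class_subset by blast

lemma twin_classes_nonempty: "A \<in> twin_classes G \<Longrightarrow> A \<noteq> {}"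
  unfolding twin_classes_def using self_in_twin_class by blast

lemma finite_twin_classes: "finite_reflexive_graph G \<Longrightarrow> finite (twin_classes G)"
  unfolding twin_classes_def using finite_reflexive_graphD(1) by blast

lemma false_twins_edge_iff:
  assumes "false_twins G x x'" and "y \<notin> twin_class G x"
  shows "(x, y) \<in> edges G \<longleftrightarrow> (x', y) \<in> edges G"
proof -
  have "x \<in> twin_class G x" "x' \<in> twin_class G x"
    using assms(1) self_in_twin_class unfolding false_twins_def twin_class_def by auto
  then have "y \<noteq> x" "y \<noteq> x'"
    using assms(2) by auto
  then show ?thesis
    using assms(1) unfolding false_twins_def by auto
qed

lemma edge_iff_twin_classes_adjacent:
  assumes G: "finite_reflexive_graph G" and x: "x \<in> verts G" and y: "y \<in> verts G"
  shows "(x, y) \<in> edges G \<longleftrightarrow>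
    x = y \<or> twin_class G x \<noteq> twin_class G y \<and> classes_adjacent G (twin_class G x) (twin_class G y)"
proof
  assume xy: "(x, y) \<in> edges G"
  have "x = y" if "twin_class G x = twin_class G y"
    using xy that self_in_twin_class[OF y] unfolding twin_class_def false_twins_def by auto
  then show "x = y \<or> twin_class G x \<noteq> twin_class G y \<and>
      classes_adjacent G (twin_class G x) (twin_class G y)"
    using xy x y self_in_twin_class unfolding classes_adjacent_def by blast
next
  assume "x = y \<or> twin_class G x \<noteq> twin_class G y \<and>
      classes_adjacent G (twin_class G x) (twin_class G y)"
  then consider "x = y"
    | x0 y0 where "x0 \<in> twin_class G x" "y0 \<in> twin_class G y" "(x0, y0) \<in> edges G"
        "twin_class G x \<noteq> twin_class G y"
    unfolding classes_adjacent_def by blast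
  then show "(x, y) \<in> edges G"
  proof cases
    case 1
    then show ?thesis
      using finite_reflexive_graphD(5)[OF G x] by simp
  next
    case 2
    have twins: "false_twins G x0 x" "false_twins G y0 y"
      using 2 false_twins_sym[OF G] unfolding twin_class_def by auto
    have classes: "twin_class G x0 = twin_class G x" "twin_class G y0 = twin_class G y"
      using 2 twin_class_eq[OF G] by auto
    have "y0 \<notin> twin_class G x0" "x \<notin> twin_class G y0"
      using 2 classes twin_class_eq[OF G] by metis+
    then have "(y, x) \<in> edges G"
      using 2 twins false_twins_edge_iff finite_reflexive_graphD(4)[OF G] by metis
    then show ?thesis
      using finite_reflexive_graphD(4)[OF G] by blast
  qed
qed

lemma ex_surj_if_card_le:
  assumes "finite A" "finite B" "B \<noteq> {}" "card B \<le> card A"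
  shows "\<exists>s. s ` A = B"
proof -
  obtain b0 where b0: "b0 \<in> B"
    using assms(3) by blast
  obtain g where g: "g ` B \<subseteq> A" "inj_on g B"
    using card_le_inj[OF assms(2,1,4)] by blast
  define s where "s x = (if x \<in> g ` B then inv_into B g x else b0)" for x
  have "s ` A \<subseteq> B"
    unfolding s_def using b0 by (auto simp: inv_into_into)
  moreover have "s (g b) = b" if "b \<in> B" for b
    unfolding s_def using g(2) that by auto
  ultimately have "s ` A = B"
    using g(1) by (metis image_subset_iff subsetI subset_antisym image_eqI)
  then show ?thesis by blast
qed

lemma ex_onto_map_respecting_twin_classes:
  assumes G1: "finite_reflexive_graph G1" and G2: "finite_reflexive_graph G2"
    and \<phi>: "bij_betw \<phi> (twin_classes G2) (twin_classes G1)"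
    and smaller: "\<And>A. A \<in> twin_classes G2 \<Longrightarrow> card (\<phi> A) \<le> card A"
  shows "\<exists>f. f ` verts G2 = verts G1 \<and> (\<forall>x\<in>verts G2. twin_class G1 (f x) = \<phi> (twin_class G2 x))"
proof -
  have \<phi>_class: "\<phi> A \<in> twin_classes G1" if "A \<in> twin_classes G2" for A
    using bij_betw_apply[OF \<phi> that] .
  have "\<exists>s. s ` A = \<phi> A" if "A \<in> twin_classes G2" for A
    using that \<phi>_class smaller twin_classes_nonempty twin_classes_subset
      finite_reflexive_graphD(1)[OF G1] finite_reflexive_graphD(1)[OF G2]
    by (meson ex_surj_if_card_le finite_subset)
  then obtain s where s: "\<And>A. A \<in> twin_classes G2 \<Longrightarrow> s A ` A = \<phi> A"
    by metis
  define f where "f x = s (twin_class G2 x) x" for x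
  have f_class: "f x \<in> verts G1 \<and> twin_class G1 (f x) = \<phi> (twin_class G2 x)"
    if "x \<in> verts G2" for x
  proof -
    have "f x \<in> \<phi> (twin_class G2 x)"
      unfolding f_def using s twin_class_in_twin_classes self_in_twin_class that by blast
    then show ?thesis
      using \<phi>_class twin_class_in_twin_classes[OF that] twin_classes_eq_twin_class[OF G1]
        twin_classes_subset by blast
  qed
  have "verts G1 \<subseteq> f ` verts G2"
  proof
    fix v assume v: "v \<in> verts G1"
    obtain A where A: "A \<in> twin_classes G2" "\<phi> A = twin_class G1 v"
      using twin_class_in_twin_classes[OF v] \<phi> unfolding bij_betw_def by (metis imageE)
    then obtain x where "x \<in> A" "s A x = v"
      using s self_in_twin_class[OF v] by (metis imageE)
    then have "x \<in> verts G2" "f x = v"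
      using A twin_classes_eq_twin_class[OF G2] twin_classes_subset[OF A(1)] unfolding f_def by auto
    then show "v \<in> f ` verts G2" by blast
  qed
  then have "f ` verts G2 = verts G1"
    using f_class by blast
  then show ?thesis
    using f_class by blast
qed

lemma shi_le_if_twin_quotients_match:
  assumes G1: "finite_reflexive_graph G1" and G2: "finite_reflexive_graph G2"
    and \<phi>: "bij_betw \<phi> (twin_classes G2) (twin_classes G1)"
    and adjacent: "\<And>A B. A \<in> twin_classes G2 \<Longrightarrow> B \<in> twin_classes G2 \<Longrightarrow>
                      classes_adjacent G1 (\<phi> A) (\<phi> B) \<longleftrightarrow> classes_adjacent G2 A B"
    and smaller: "\<And>A. A \<in> twin_classes G2 \<Longrightarrow> card (\<phi> A) \<le> card A"
  shows "shi_le G1 G2"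
proof -
  obtain f where onto: "f ` verts G2 = verts G1"
    and f_class: "\<And>x. x \<in> verts G2 \<Longrightarrow> twin_class G1 (f x) = \<phi> (twin_class G2 x)"
    using ex_onto_map_respecting_twin_classes[OF G1 G2 \<phi> smaller] by metis
  have edge_image_iff: "(f x, f y) \<in> edges G1 \<longleftrightarrow> f x = f y \<or> twin_class G2 x \<noteq> twin_class G2 y \<and>
      classes_adjacent G2 (twin_class G2 x) (twin_class G2 y)"
    if x: "x \<in> verts G2" and y: "y \<in> verts G2" for x y
  proof -
    have "f x \<in> verts G1" "f y \<in> verts G1"
      using imageI[OF x, of f] imageI[OF y, of f] onto by simp_all
    moreover have "\<phi> (twin_class G2 x) = \<phi> (twin_class G2 y) \<longleftrightarrow> twin_class G2 x = twin_class G2 y"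
      using inj_on_eq_iff[OF bij_betw_imp_inj_on[OF \<phi>]] twin_class_in_twin_classes x y by blast
    ultimately show ?thesis
      using edge_iff_twin_classes_adjacent[OF G1, of "f x" "f y"] f_class[OF x] f_class[OF y]
        adjacent[OF twin_class_in_twin_classes twin_class_in_twin_classes, OF x y] by simp
  qed
  show ?thesis
  proof (rule shi_leI[OF G2 onto])
    fix x y assume xy: "(x, y) \<in> edges G2"
    then have "x \<in> verts G2" "y \<in> verts G2"
      using finite_reflexive_graphD(2,3)[OF G2] by blast+
    then show "(f x, f y) \<in> edges G1"
      using xy edge_image_iff edge_iff_twin_classes_adjacent[OF G2] by auto
  next
    fix x y assume "x \<in> verts G2" "y \<in> verts G2" "f x \<noteq> f y" "(f x, f y) \<in> edges G1"
    then show "(x, y) \<in> edges G2"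
      using edge_image_iff edge_iff_twin_classes_adjacent[OF G2] by auto
  qed
qed

lemma shi_le_if_indexed_twin_quotients_match:
  fixes k :: nat
  assumes G1: "finite_reflexive_graph G1" and G2: "finite_reflexive_graph G2"
    and e1: "bij_betw e1 {0..<k} (twin_classes G1)" and e2: "bij_betw e2 {0..<k} (twin_classes G2)"
    and adjacent: "\<And>a b. a < k \<Longrightarrow> b < k \<Longrightarrow>
                      classes_adjacent G1 (e1 a) (e1 b) \<longleftrightarrow> classes_adjacent G2 (e2 a) (e2 b)"
    and smaller: "\<And>a. a < k \<Longrightarrow> card (e1 a) \<le> card (e2 a)"
  shows "shi_le G1 G2"
proof -
  define \<phi> where "\<phi> = e1 \<circ> inv_into {0..<k} e2"
  have \<phi>_bij: "bij_betw \<phi> (twin_classes G2) (twin_classes G1)"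
    unfolding \<phi>_def by (rule bij_betw_trans[OF bij_betw_inv_into[OF e2] e1])
  have index: "\<exists>a<k. A = e2 a \<and> \<phi> A = e1 a" if "A \<in> twin_classes G2" for A
  proof -
    have "A \<in> e2 ` {0..<k}"
      using that e2 unfolding bij_betw_def by simp
    then obtain a where a: "a < k" "A = e2 a"
      by auto
    moreover have "inv_into {0..<k} e2 (e2 a) = a"
      using inv_into_f_f[OF bij_betw_imp_inj_on[OF e2], of a] a(1) by simp
    ultimately show ?thesis
      unfolding \<phi>_def by auto
  qed
  show ?thesis
  proof (rule shi_le_if_twin_quotients_match[OF G1 G2 \<phi>_bij])
    fix A B assume "A \<in> twin_classes G2" "B \<in> twin_classes G2"
    then obtain a b where "a < k" "b < k" "A = e2 a" "\<phi> A = e1 a" "B = e2 b" "\<phi> B = e1 b"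
      using index by meson
    then show "classes_adjacent G1 (\<phi> A) (\<phi> B) \<longleftrightarrow> classes_adjacent G2 A B"
      using adjacent by simp
  next
    fix A assume "A \<in> twin_classes G2"
    then obtain a where "a < k" "A = e2 a" "\<phi> A = e1 a"
      using index by meson
    then show "card (\<phi> A) \<le> card A"
      using smaller by simp
  qed
qed

subsection \<open>Dickson's lemma for infinite sets of indices\<close>

lemma finite_if_strictly_decreasing_on:
  fixes h :: "nat \<Rightarrow> nat"
  assumes decreasing: "\<And>x y. x \<in> Y \<Longrightarrow> y \<in> Y \<Longrightarrow> x < y \<Longrightarrow> h y < h x"
  shows "finite Y"
proof (rule ccontr)
  assume "infinite Y"
  then obtain y0 where y0: "y0 \<in> Y"
    by (metis finite.emptyI ex_in_conv)
  let ?Y' = "Y - {..y0}"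
  have "infinite ?Y'"
    using \<open>infinite Y\<close> by (simp add: Diff_infinite_finite)
  moreover have "inj_on h ?Y'"
    using decreasing by (intro inj_onI) (metis DiffD1 less_irrefl linorder_neq_iff)
  moreover have "h ` ?Y' \<subseteq> {..<h y0}"
  proof (rule image_subsetI)
    fix y assume "y \<in> ?Y'"
    then show "h y \<in> {..<h y0}"
      using decreasing[OF y0] by (simp add: not_le)
  qed
  ultimately show False
    by (meson finite_imageD finite_lessThan finite_subset)
qed

lemma ex_infinite_nondecreasing_subset:
  fixes h :: "nat \<Rightarrow> nat"
  assumes "infinite Z"
  shows "\<exists>Y\<subseteq>Z. infinite Y \<and> (\<forall>x\<in>Y. \<forall>y\<in>Y. x < y \<longrightarrow> h x \<le> h y)"
proof -
  define c where "c S = (if h (Min S) \<le> h (Max S) then 0 else 1 :: nat)" for S :: "nat set"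
  have pair: "c {x, y} = (if h x \<le> h y then 0 else 1)" if "x < y" for x y
    unfolding c_def using that by (simp add: min_def max_def)
  have "\<forall>x\<in>Z. \<forall>y\<in>Z. x \<noteq> y \<longrightarrow> c {x, y} < 2"
    unfolding c_def by simp
  from Ramsey2[OF assms this] obtain Y t where Y: "Y \<subseteq> Z" "infinite Y"
    and homogeneous: "\<forall>x\<in>Y. \<forall>y\<in>Y. x \<noteq> y \<longrightarrow> c {x, y} = t"
    by blast
  have colour: "c {x, y} = t" if "x \<in> Y" "y \<in> Y" "x < y" for x y
    using homogeneous that by (metis less_irrefl)
  show ?thesis
  proof (cases "t = 0")
    case True
    then have "h x \<le> h y" if "x \<in> Y" "y \<in> Y" "x < y" for x y
      using colour[OF that] pair[OF that(3)] by (simp split: if_splits)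
    then show ?thesis
      using Y by blast
  next
    case False
    then have "h y < h x" if "x \<in> Y" "y \<in> Y" "x < y" for x y
      using colour[OF that] pair[OF that(3)] by (simp split: if_splits)
    then show ?thesis
      using finite_if_strictly_decreasing_on Y(2) by blast
  qed
qed

lemma dickson_infinite_subset:
  fixes F :: "nat \<Rightarrow> nat \<Rightarrow> nat"
  assumes "infinite Z"
  shows "\<exists>Y\<subseteq>Z. infinite Y \<and> (\<forall>l<k. \<forall>x\<in>Y. \<forall>y\<in>Y. x < y \<longrightarrow> F x l \<le> F y l)"
proof (induction k)
  case 0
  then show ?case
    using assms by blast
next
  case (Suc k)
  then obtain Y where Y: "Y \<subseteq> Z" "infinite Y"
    "\<forall>l<k. \<forall>x\<in>Y. \<forall>y\<in>Y. x < y \<longrightarrow> F x l \<le> F y l"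
    by blast
  obtain Y' where Y': "Y' \<subseteq> Y" "infinite Y'" "\<forall>x\<in>Y'. \<forall>y\<in>Y'. x < y \<longrightarrow> F x k \<le> F y k"
    using ex_infinite_nondecreasing_subset[OF Y(2), of "\<lambda>x. F x k"] by blast
  have "F x l \<le> F y l" if "l < Suc k" "x \<in> Y'" "y \<in> Y'" "x < y" for l x y
  proof (cases "l = k")
    case True
    then show ?thesis
      using Y'(3) that(2-4) by blast
  next
    case False
    then show ?thesis
      using Y(3) Y'(1) that by (meson less_SucE subsetD)
  qed
  moreover have "Y' \<subseteq> Z"
    using Y(1) Y'(1) by (rule order_trans[rotated])
  ultimately show ?case
    using Y'(2) by blast
qed

subsection \<open>Matchings\<close>

definition matching :: "graph \<Rightarrow> (nat \<times> nat) set \<Rightarrow> bool" where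
  "matching G M \<longleftrightarrow> M \<subseteq> edges G \<and> (\<forall>p\<in>M. fst p \<noteq> snd p) \<and>
     (\<forall>p\<in>M. \<forall>q\<in>M. p \<noteq> q \<longrightarrow>
        fst p \<noteq> fst q \<and> fst p \<noteq> snd q \<and> snd p \<noteq> fst q \<and> snd p \<noteq> snd q)"

lemma finite_matching: "finite_reflexive_graph G \<Longrightarrow> matching G M \<Longrightarrow> finite M"
  unfolding matching_def finite_reflexive_graph_def by (meson finite_SigmaI finite_subset)

lemma matching_insert:
  assumes "matching G M" "(u, w) \<in> edges G" "u \<noteq> w"
    and "u \<notin> fst ` M \<union> snd ` M" "w \<notin> fst ` M \<union> snd ` M"
  shows "matching G (insert (u, w) M)"
proof -
  have fresh: "fst p \<noteq> x \<and> snd p \<noteq> x" if "p \<in> M" "x \<in> {u, w}" for p x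
    using assms(4,5) that by force
  have disjoint: "fst p \<noteq> fst q \<and> fst p \<noteq> snd q \<and> snd p \<noteq> fst q \<and> snd p \<noteq> snd q"
    if "p \<in> M" "q \<in> M" "p \<noteq> q" for p q
    using assms(1) that unfolding matching_def by blast
  have "fst p \<noteq> fst q \<and> fst p \<noteq> snd q \<and> snd p \<noteq> fst q \<and> snd p \<noteq> snd q"
    if pq: "p \<in> insert (u, w) M" "q \<in> insert (u, w) M" "p \<noteq> q" for p q
  proof -
    consider "p = (u, w)" "q \<in> M" | "q = (u, w)" "p \<in> M" | "p \<in> M" "q \<in> M"
      using pq by blast
    then show ?thesis
    proof cases
      case 1
      then show ?thesis
        using fresh[of q u] fresh[of q w] by auto
    next
      case 2
      then show ?thesis
        using fresh[of p u] fresh[of p w] by auto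
    qed (use disjoint pq(3) in blast)
  qed
  moreover have "insert (u, w) M \<subseteq> edges G" "\<forall>p\<in>insert (u, w) M. fst p \<noteq> snd p"
    using assms(1-3) unfolding matching_def by auto
  ultimately show ?thesis
    unfolding matching_def by meson
qed

lemma shi_le_complete_rgraphI:
  assumes G: "finite_reflexive_graph G" and onto: "f ` verts G = {0..<n}"
    and pairs: "\<And>i j. i < j \<Longrightarrow> j < n \<Longrightarrow> \<exists>x y. (x, y) \<in> edges G \<and> f x = i \<and> f y = j"
  shows "shi_le (complete_rgraph n) G"
proof -
  have verts_K: "verts (complete_rgraph n) = {0..<n}"
    and edges_K: "edges (complete_rgraph n) = {0..<n} \<times> {0..<n}"
    unfolding complete_rgraph_def verts_def edges_def by simp_all
  have f_lt: "f x < n" if "x \<in> verts G" for x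
    using that onto by (metis atLeastLessThan_iff imageI)
  have "graph_hom G (complete_rgraph n) f"
    unfolding graph_hom_def verts_K edges_K
    using f_lt finite_reflexive_graphD(2,3)[OF G] by simp
  moreover have "\<exists>x y. (x, y) \<in> edges G \<and> f x = i \<and> f y = j"
    if "i \<in> f ` verts G" "j \<in> f ` verts G" for i j
  proof (cases i j rule: linorder_cases)
    case less
    moreover have "j < n"
      using that(2) f_lt by blast
    ultimately show ?thesis
      by (rule pairs)
  next
    case equal
    then show ?thesis
      using that finite_reflexive_graphD(5)[OF G] by blast
  next
    case greater
    moreover have "i < n"
      using that(1) f_lt by blast
    ultimately obtain x y where "(x, y) \<in> edges G" "f x = j" "f y = i"
      using pairs by blast
    then show ?thesis
      using finite_reflexive_graphD(4)[OF G] by blast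
  qed
  ultimately have "strong_hom G (complete_rgraph n) f"
    unfolding strong_hom_def by blast
  then show ?thesis
    unfolding shi_le_def verts_K using onto by blast
qed

lemma inj_on_matching_endpoints:
  assumes M: "matching G M" and p: "p ` P \<subseteq> M" "inj_on p P"
  shows "inj_on (\<lambda>(q, b). if b then fst (p q) else snd (p q)) (P \<times> UNIV)"
proof (rule inj_onI, clarify)
  fix q b q' b'
  assume q: "q \<in> P" "q' \<in> P"
    and eq: "(if b then fst (p q) else snd (p q)) = (if b' then fst (p q') else snd (p q'))"
  have pM: "p q \<in> M" "p q' \<in> M"
    using q p(1) by auto
  have "p q = p q'"
    using M pM eq unfolding matching_def by (auto split: if_splits)
  moreover have "fst (p q) \<noteq> snd (p q)"
    using M pM(1) unfolding matching_def by blast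
  ultimately show "q = q' \<and> b = b'"
    using eq p(2) q by (auto simp: inj_on_eq_iff split: if_splits)
qed

text \<open>The edge \<open>p (i, j)\<close> is collapsed onto the edge \<open>(i, j)\<close> of \<open>K\<^sub>n\<close>; all other vertices go to \<open>0\<close>.\<close>

lemma shi_le_complete_rgraph_if_disjoint_edges:
  fixes p :: "nat \<times> nat \<Rightarrow> nat \<times> nat"
  assumes G: "finite_reflexive_graph G" and n: "n \<ge> 1" and nonempty: "verts G \<noteq> {}"
    and edge: "\<And>i j. i < j \<Longrightarrow> j < n \<Longrightarrow> p (i, j) \<in> edges G"
    and disjoint: "inj_on (\<lambda>(q, b). if b then fst (p q) else snd (p q)) ({(i, j). i < j \<and> j < n} \<times> UNIV)"
  shows "shi_le (complete_rgraph n) G"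
proof -
  define P where "P = {(i, j). i < j \<and> j < (n::nat)}"
  define ends where "ends = (\<lambda>(q, b). if b then fst (p q) else snd (p q))"
  define label where "label = (\<lambda>(q, b). if b then fst q else snd q :: nat)"
  have inj: "inj_on ends (P \<times> UNIV)"
    unfolding ends_def P_def using disjoint .
  define f where
    "f v = (if v \<in> ends ` (P \<times> UNIV) then label (inv_into (P \<times> UNIV) ends v) else 0)" for v
  have f_ends: "f (ends c) = label c" if "c \<in> P \<times> UNIV" for c
    unfolding f_def using inv_into_f_f[OF inj that] that by simp
  have matched_edge: "(ends (q, True), ends (q, False)) \<in> edges G" if "q \<in> P" for q
    using that edge unfolding P_def ends_def by auto
  have ends_verts: "ends c \<in> verts G" if c_in: "c \<in> P \<times> UNIV" for c
  proof -
    obtain q b where c: "c = (q, b)" "q \<in> P"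
      using c_in by auto
    have "ends (q, True) \<in> verts G" "ends (q, False) \<in> verts G"
      using matched_edge[OF c(2)] finite_reflexive_graphD(2,3)[OF G] by blast+
    then show ?thesis
      unfolding c(1) by (cases b) simp_all
  qed
  have label_lt: "label c < n" if "c \<in> P \<times> UNIV" for c
    using that unfolding label_def P_def by auto
  have f_lt: "f v < n" for v
    unfolding f_def using n label_lt inv_into_into[of v ends "P \<times> UNIV"] by auto
  have "i \<in> f ` verts G" if i: "i < n" for i
  proof (cases "n = 1")
    case True
    then show ?thesis
      using nonempty i f_lt by (metis ex_in_conv image_eqI less_one)
  next
    case False
    then have "((0, i), False) \<in> P \<times> UNIV \<and> label ((0, i), False) = i \<or>
        ((0, 1), True) \<in> P \<times> UNIV \<and> label ((0, 1), True) = i"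
      using i n unfolding P_def label_def by auto
    then show ?thesis
      using f_ends ends_verts by (metis image_eqI)
  qed
  then have "f ` verts G = {0..<n}"
    using f_lt by fastforce
  then show ?thesis
  proof (rule shi_le_complete_rgraphI[OF G])
    fix i j assume "i < j" "j < n"
    then have "(i, j) \<in> P"
      unfolding P_def by simp
    then show "\<exists>x y. (x, y) \<in> edges G \<and> f x = i \<and> f y = j"
      using matched_edge f_ends unfolding label_def by fastforce
  qed
qed

lemma shi_le_complete_rgraph_if_matching:
  assumes G: "finite_reflexive_graph G" and n: "n \<ge> 1"
    and M: "matching G M" and large: "n * n \<le> card M"
  shows "shi_le (complete_rgraph n) G"
proof -
  define P where "P = {(i, j). i < j \<and> j < (n::nat)}"
  have "P \<subseteq> {0..<n} \<times> {0..<n}"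
    unfolding P_def by auto
  then have "finite P" and "card P \<le> n * n"
    using card_mono[of "{0..<n} \<times> {0..<n}" P] finite_subset by (auto simp: card_cartesian_product)
  then obtain p where p: "p ` P \<subseteq> M" "inj_on p P"
    using card_le_inj[OF _ finite_matching[OF G M]] large by (meson le_trans)
  show ?thesis
  proof (rule shi_le_complete_rgraph_if_disjoint_edges[OF G n])
    have "M \<noteq> {}"
      using n large by auto
    then obtain e where "e \<in> M"
      by blast
    then show "verts G \<noteq> {}"
      using M finite_reflexive_graphD(2)[OF G] unfolding matching_def by (metis prod.collapse subsetD empty_iff)
    show "p (i, j) \<in> edges G" if "i < j" "j < n" for i j
      using that p(1) M unfolding P_def matching_def by blast
    show "inj_on (\<lambda>(q, b). if b then fst (p q) else snd (p q)) ({(i, j). i < j \<and> j < n} \<times> UNIV)"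
      using inj_on_matching_endpoints[OF M p] unfolding P_def .
  qed
qed

lemma card_image_le_if_factors:
  assumes "finite (g ` A)" and "\<And>x y. x \<in> A \<Longrightarrow> y \<in> A \<Longrightarrow> g x = g y \<Longrightarrow> f x = f y"
  shows "card (f ` A) \<le> card (g ` A)"
proof -
  have "f (inv_into A g (g x)) = f x" if "x \<in> A" for x
    using assms(2) inv_into_into f_inv_into_f that by (metis image_eqI)
  then have "(f \<circ> inv_into A g) ` (g ` A) = f ` A"
    by (simp add: image_image cong: image_cong)
  then show ?thesis
    using card_image_le[OF assms(1), of "f \<circ> inv_into A g"] by simp
qed

lemma neighbour_matched_if_maximum_matching:
  assumes G: "finite_reflexive_graph G" and M: "matching G M"
    and maximum: "\<And>M'. matching G M' \<Longrightarrow> card M' \<le> card M"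
    and u: "u \<notin> fst ` M \<union> snd ` M" and uw: "(u, w) \<in> edges G" "w \<noteq> u"
  shows "w \<in> fst ` M \<union> snd ` M"
proof (rule ccontr)
  assume w: "w \<notin> fst ` M \<union> snd ` M"
  then have "matching G (insert (u, w) M)"
    using matching_insert[OF M uw(1)] uw(2) u by metis
  moreover have "(u, w) \<notin> M"
    using u by force
  ultimately have "Suc (card M) \<le> card M"
    using maximum finite_matching[OF G M] by (metis card_insert_disjoint)
  then show False
    by simp
qed

text \<open>Unmatched vertices with the same neighbourhood are false twins, since all their neighbours
are matched.\<close>

lemma card_unmatched_twin_classes_le:
  assumes G: "finite_reflexive_graph G" and M: "matching G M"
    and maximum: "\<And>M'. matching G M' \<Longrightarrow> card M' \<le> card M"
  defines "W \<equiv> fst ` M \<union> snd ` M"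
  shows "card (twin_class G ` (verts G - W)) \<le> 2 ^ card W"
proof -
  define U where "U = verts G - W"
  define N where "N u = {w. w \<noteq> u \<and> (u, w) \<in> edges G}" for u
  have "finite W"
    unfolding W_def using finite_matching[OF G M] by simp
  have N_W: "N u \<subseteq> W" if "u \<in> U" for u
    using neighbour_matched_if_maximum_matching[OF G M maximum] that
    unfolding N_def U_def W_def by blast
  have same_class: "twin_class G u = twin_class G u'"
    if u: "u \<in> U" "u' \<in> U" and N: "N u = N u'" for u u'
  proof -
    have "u' \<notin> N u"
      using N_W u unfolding U_def by blast
    then have "false_twins G u u'"
      using u N unfolding false_twins_def U_def N_def by blast
    then show ?thesis
      using twin_class_eq[OF G] unfolding twin_class_def by blast
  qed
  have "N ` U \<subseteq> Pow W"
    using N_W by blast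
  moreover from this have "finite (N ` U)"
    using \<open>finite W\<close> by (meson finite_Pow_iff finite_subset)
  ultimately have "card (twin_class G ` U) \<le> card (Pow W)"
    using card_image_le_if_factors[of N U "twin_class G", OF _ same_class] \<open>finite W\<close>
    by (meson card_mono finite_Pow_iff le_trans)
  then show ?thesis
    unfolding U_def using \<open>finite W\<close> by (simp add: card_Pow)
qed

lemma card_twin_classes_le_if_matchings_small:
  assumes G: "finite_reflexive_graph G" and small: "\<And>M. matching G M \<Longrightarrow> card M < m"
  shows "card (twin_classes G) \<le> 2 * m + 2 ^ (2 * m)"
proof -
  have "matching G {}"
    unfolding matching_def by simp
  then obtain M where M: "matching G M" and maximum: "\<And>M'. matching G M' \<Longrightarrow> card M' \<le> card M"
    using ex_has_greatest_nat[of "matching G" "{}" card m] small by blast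
  define W where "W = fst ` M \<union> snd ` M"
  have "finite W"
    unfolding W_def using finite_matching[OF G M] by simp
  have "card W \<le> card (fst ` M) + card (snd ` M)"
    unfolding W_def by (rule card_Un_le)
  also have "\<dots> \<le> 2 * card M"
    using card_image_le[OF finite_matching[OF G M], of fst]
      card_image_le[OF finite_matching[OF G M], of snd] by simp
  also have "\<dots> \<le> 2 * m"
    using small[OF M] by simp
  finally have "card W \<le> 2 * m" .
  then have unmatched: "card (twin_class G ` (verts G - W)) \<le> 2 ^ (2 * m)"
    using card_unmatched_twin_classes_le[OF G M maximum] unfolding W_def
    by (meson le_trans one_le_numeral power_increasing)
  have matched: "card (twin_class G ` W) \<le> 2 * m"
    using card_image_le[OF \<open>finite W\<close>, of "twin_class G"] \<open>card W \<le> 2 * m\<close> by linarith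
  have "card (twin_classes G) \<le> card (twin_class G ` W \<union> twin_class G ` (verts G - W))"
  proof (rule card_mono)
    show "finite (twin_class G ` W \<union> twin_class G ` (verts G - W))"
      using \<open>finite W\<close> finite_reflexive_graphD(1)[OF G] by simp
    show "twin_classes G \<subseteq> twin_class G ` W \<union> twin_class G ` (verts G - W)"
      unfolding twin_classes_def by blast
  qed
  then show ?thesis
    using unmatched matched card_Un_le[of "twin_class G ` W" "twin_class G ` (verts G - W)"]
    by linarith
qed

subsection \<open>Graphs avoiding a complete graph\<close>

lemma card_twin_classes_le_if_Av_K:
  assumes n: "n \<ge> 1" and H: "H \<in> Av_K n"
  shows "card (twin_classes H) \<le> 2 * (n * n) + 2 ^ (2 * (n * n))"
proof (rule card_twin_classes_le_if_matchings_small)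
  show G: "finite_reflexive_graph H"
    using H unfolding Av_K_def by blast
  show "card M < n * n" if "matching H M" for M
    using H shi_le_complete_rgraph_if_matching[OF G n that] unfolding Av_K_def by force
qed

lemma ex_shi_le_pair_if_twin_classes_bounded:
  fixes g :: "nat \<Rightarrow> graph"
  assumes G: "\<And>i. finite_reflexive_graph (g i)"
    and bounded: "\<And>i. card (twin_classes (g i)) \<le> K"
  shows "\<exists>i j. i < j \<and> shi_le (g i) (g j)"
proof -
  define k where "k i = card (twin_classes (g i))" for i
  have "\<forall>i. \<exists>e. bij_betw e {0..<k i} (twin_classes (g i))"
    unfolding k_def using ex_bij_betw_nat_finite[OF finite_twin_classes[OF G]] by blast
  then obtain e where e: "\<And>i. bij_betw (e i) {0..<k i} (twin_classes (g i))"
    by metis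
  define shape where
    "shape i = (k i, {(a, b). a < k i \<and> b < k i \<and> classes_adjacent (g i) (e i a) (e i b)})" for i
  have "shape i \<in> {0..K} \<times> Pow ({0..<K} \<times> {0..<K})" for i
    using bounded[of i] unfolding shape_def k_def by auto
  then have "range shape \<subseteq> {0..K} \<times> Pow ({0..<K} \<times> {0..<K})"
    by blast
  then have "finite (range shape)"
    by (rule finite_subset) simp
  then obtain i0 where "infinite {i. shape i = shape i0}"
    using pigeonhole_infinite[OF infinite_UNIV_nat] by auto
  from dickson_infinite_subset[OF this, where F = "\<lambda>i l. card (e i l)" and k = "k i0"]
  obtain Y where Y: "Y \<subseteq> {i. shape i = shape i0}" "infinite Y"
    and sizes: "\<forall>l<k i0. \<forall>x\<in>Y. \<forall>y\<in>Y. x < y \<longrightarrow> card (e x l) \<le> card (e y l)"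
    by blast
  obtain x where x: "x \<in> Y"
    using Y(2) by (metis ex_in_conv finite.emptyI)
  then obtain y where y: "y \<in> Y" "x < y"
    using Y(2) infinite_nat_iff_unbounded by blast
  have shapes: "shape x = shape i0" "shape y = shape i0"
    using x y Y(1) by auto
  then have k: "k x = k i0" "k y = k i0"
    unfolding shape_def by simp_all
  have same_adjacency:
    "classes_adjacent (g x) (e x a) (e x b) \<longleftrightarrow> classes_adjacent (g y) (e y a) (e y b)"
    if "a < k i0" "b < k i0" for a b
  proof -
    have "(a, b) \<in> snd (shape x) \<longleftrightarrow> (a, b) \<in> snd (shape y)"
      using shapes by simp
    then show ?thesis
      using that k unfolding shape_def by simp
  qed
  have "shi_le (g x) (g y)"
  proof (rule shi_le_if_indexed_twin_quotients_match[OF G G _ _ same_adjacency])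
    show "bij_betw (e x) {0..<k i0} (twin_classes (g x))" "bij_betw (e y) {0..<k i0} (twin_classes (g y))"
      using e k by metis+
    show "card (e x a) \<le> card (e y a)" if "a < k i0" for a
      using sizes x y that by blast
  qed
  then show ?thesis
    using y(2) by blast
qed

theorem theorem3p6:
  fixes n :: nat
  assumes "n \<ge> 1"
  shows "wqo_class shi_le (Av_K n)"
proof -
  have G: "finite_reflexive_graph H" and bounded: "card (twin_classes H) \<le> 2 * (n * n) + 2 ^ (2 * (n * n))"
    if "H \<in> Av_K n" for H
    using that card_twin_classes_le_if_Av_K[OF assms that] unfolding Av_K_def by simp_all
  show ?thesis
    unfolding wqo_class_def
  proof (intro conjI notI; elim exE conjE)
    fix g :: "nat \<Rightarrow> graph"
    assume "\<forall>i. g i \<in> Av_K n" and "\<forall>i. shi_le (g (Suc i)) (g i) \<and> \<not> shi_le (g i) (g (Suc i))"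
    then show False
      using no_strictly_descending_shi_chain[of g] G by simp
  next
    fix g :: "nat \<Rightarrow> graph"
    assume "\<forall>i. g i \<in> Av_K n" and antichain: "\<forall>i j. i \<noteq> j \<longrightarrow> \<not> shi_le (g i) (g j)"
    then have "\<And>i. finite_reflexive_graph (g i)"
      and "\<And>i. card (twin_classes (g i)) \<le> 2 * (n * n) + 2 ^ (2 * (n * n))"
      using G bounded by blast+
    then obtain i j where "i < j" "shi_le (g i) (g j)"
      using ex_shi_le_pair_if_twin_classes_bounded by blast
    then show False
      using antichain by simp
  qed
qed

end
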